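(* Let $h>0$, $0<\alpha\le 2$, $N=2^n$, and $M=2^m$ with $M\ge 2N$. Let $E^{(M)}$ be the $N\times N$ matrix with entries $(E^{(M)})_{ij}=\sum_{\ell\in\mathbb Z\setminus\{0\}}c_{i-j+\ell M}$ for $0\le i,j\le N-1$, where $c_r$ is the kernel defined in the context. Then \[ \|E^{(M)}\|_2\le \sum_{r\in\mathbb Z,\ |r|\ge M-N+1}|c_r|. \]
   Context: For $r\in\mathbb Z$, $c_r=\frac{h}{2\pi}\int_{-\pi/h}^{\pi/h}|\xi|^\alpha e^{i\xi h r}\,d\xi$ (the convolution kernel of the semi-discrete fractional Laplacian with symbol $|\xi|^\alpha$ on the lattice $h\mathbb Z$); it is real and even, $c_r=c_{-r}$. $\|\cdot\|_2$ denotes the spectral (operator 2-)norm. *)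

theory Defs
  imports "HOL-Analysis.Analysis"
begin

definition frac_kernel_cplx :: "real \<Rightarrow> real \<Rightarrow> int \<Rightarrow> complex" where
  "frac_kernel_cplx h \<alpha> r =
     complex_of_real (h / (2 * pi)) *
     integral {-pi/h..pi/h}
       (\<lambda>\<xi>. complex_of_real (\<bar>\<xi>\<bar> powr \<alpha>) * exp (\<i> * complex_of_real (\<xi> * h * of_int r)))"

text \<open>The kernel is real; c_r is its real part (the imaginary part vanishes).\<close>
definition frac_kernel :: "real \<Rightarrow> real \<Rightarrow> int \<Rightarrow> real" where
  "frac_kernel h \<alpha> r = Re (frac_kernel_cplx h \<alpha> r)"

definition spec_norm :: "nat \<Rightarrow> (nat \<Rightarrow> nat \<Rightarrow> real) \<Rightarrow> real" where
  "spec_norm N A = Sup {sqrt (\<Sum>i<N. (\<Sum>j<N. A i j * x j)^2) | x :: nat \<Rightarrow> real.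
                         (\<Sum>j<N. (x j)^2) = 1}"

definition E_mat :: "real \<Rightarrow> real \<Rightarrow> nat \<Rightarrow> nat \<Rightarrow> nat \<Rightarrow> real" where
  "E_mat h \<alpha> M i j = (\<Sum>\<^sub>\<infinity> l \<in> (UNIV - {0::int}). frac_kernel h \<alpha> (int i - int j + l * int M))"

end

theory Submission
  imports Defs
begin

text \<open>By the Schur test, the spectral norm of \<open>E_mat h \<alpha> M\<close> is at most its largest absolute row or
  column sum. Entry \<open>(i, j)\<close> sums \<open>c\<close> over the coset \<open>i - j + M\<int>\<close> with the point \<open>i - j\<close> removed.
  Since \<open>\<bar>i - j\<bar> < N \<le> M / 2\<close>, these punctured cosets are pairwise disjoint along a row (or column)
  and lie in \<open>{r. \<bar>r\<bar> \<ge> M - N + 1}\<close>, so every row and column sum is bounded by the tail sum of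
  \<open>\<bar>c r\<bar>\<close>. This rearrangement needs absolute summability of \<open>c\<close>: integrating
  \<open>c r = h / \<pi> * integral {0..\<pi>/h} (\<lambda>\<xi>. \<xi> powr \<alpha> * cos (h r \<xi>))\<close> by parts twice gives
  \<open>\<bar>c r\<bar> = O(\<bar>r\<bar> powr (-1 - \<alpha>/2))\<close>.\<close>

lemma sum_mult_square_le_abs_weighted:
  fixes a x :: "nat \<Rightarrow> real"
  shows "(\<Sum>j<N. a j * x j)^2 \<le> (\<Sum>j<N. \<bar>a j\<bar>) * (\<Sum>j<N. \<bar>a j\<bar> * (x j)^2)"
proof -
  have "\<bar>\<Sum>j<N. a j * x j\<bar> \<le> (\<Sum>j<N. sqrt \<bar>a j\<bar> * (sqrt \<bar>a j\<bar> * \<bar>x j\<bar>))"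
    by (rule order.trans[OF sum_abs]) (simp add: abs_mult mult.assoc[symmetric])
  then have "(\<Sum>j<N. a j * x j)^2 \<le> (\<Sum>j<N. sqrt \<bar>a j\<bar> * (sqrt \<bar>a j\<bar> * \<bar>x j\<bar>))^2"
    by (metis abs_ge_zero power2_abs power_mono)
  also have "\<dots> \<le> (\<Sum>j<N. (sqrt \<bar>a j\<bar>)^2) * (\<Sum>j<N. (sqrt \<bar>a j\<bar> * \<bar>x j\<bar>)^2)"
    by (rule Cauchy_Schwarz_ineq_sum)
  also have "\<dots> = (\<Sum>j<N. \<bar>a j\<bar>) * (\<Sum>j<N. \<bar>a j\<bar> * (x j)^2)"
    by (simp add: power_mult_distrib)
  finally show ?thesis .
qed

lemma spec_norm_le_Schur:
  fixes A :: "nat \<Rightarrow> nat \<Rightarrow> real"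
  assumes "N > 0"
    and row: "\<And>i. i < N \<Longrightarrow> (\<Sum>j<N. \<bar>A i j\<bar>) \<le> R"
    and col: "\<And>j. j < N \<Longrightarrow> (\<Sum>i<N. \<bar>A i j\<bar>) \<le> R"
  shows "spec_norm N A \<le> R"
  unfolding spec_norm_def
proof (rule cSup_least)
  define e0 :: "nat \<Rightarrow> real" where "e0 j = (if j = 0 then 1 else 0)" for j
  have "(\<Sum>j<N. (e0 j)^2) = (\<Sum>j<N. if j = 0 then 1 else 0)"
    by (intro sum.cong) (auto simp: e0_def)
  also have "\<dots> = 1"
    using \<open>N > 0\<close> by simp
  finally show "{sqrt (\<Sum>i<N. (\<Sum>j<N. A i j * x j)^2) | x. (\<Sum>j<N. (x j)^2) = 1} \<noteq> {}"
    by blast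
next
  have R: "R \<ge> 0" using row[OF \<open>N > 0\<close>] by (meson order.trans sum_nonneg abs_ge_zero)
  fix s assume "s \<in> {sqrt (\<Sum>i<N. (\<Sum>j<N. A i j * x j)^2) | x. (\<Sum>j<N. (x j)^2) = 1}"
  then obtain x where s: "s = sqrt (\<Sum>i<N. (\<Sum>j<N. A i j * x j)^2)" and x: "(\<Sum>j<N. (x j)^2) = 1"
    by blast
  have "(\<Sum>j<N. A i j * x j)^2 \<le> R * (\<Sum>j<N. \<bar>A i j\<bar> * (x j)^2)" if "i < N" for i
    by (rule order.trans[OF sum_mult_square_le_abs_weighted mult_right_mono[OF row[OF that]]])
      (simp add: sum_nonneg)
  then have "(\<Sum>i<N. (\<Sum>j<N. A i j * x j)^2) \<le> (\<Sum>i<N. R * (\<Sum>j<N. \<bar>A i j\<bar> * (x j)^2))"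
    by (intro sum_mono) simp
  also have "\<dots> = R * (\<Sum>i<N. \<Sum>j<N. \<bar>A i j\<bar> * (x j)^2)"
    by (simp add: sum_distrib_left)
  also have "\<dots> = R * (\<Sum>j<N. (x j)^2 * (\<Sum>i<N. \<bar>A i j\<bar>))"
    by (subst sum.swap) (simp add: sum_distrib_left mult.commute)
  also have "\<dots> \<le> R * (\<Sum>j<N. (x j)^2 * R)"
    using col R by (intro mult_left_mono sum_mono) auto
  also have "\<dots> = R^2"
    using x by (simp add: sum_distrib_right[symmetric] power2_eq_square)
  finally show "s \<le> R"
    unfolding s by (rule real_le_lsqrt[OF R])
qed

lemma sum_abs_infsum_shifted_lattice_le_tail:
  fixes c :: "int \<Rightarrow> real" and off :: "nat \<Rightarrow> int" and N M :: nat
  assumes summable: "(\<lambda>r. \<bar>c r\<bar>) summable_on UNIV"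
    and inj: "inj_on off {..<N}"
    and off_bound: "\<And>k. k < N \<Longrightarrow> \<bar>off k\<bar> \<le> int N - 1"
    and "2 * N \<le> M" and "N > 0"
  shows "(\<Sum>k<N. \<bar>\<Sum>\<^sub>\<infinity>l\<in>UNIV - {0}. c (off k + l * int M)\<bar>)
           \<le> (\<Sum>\<^sub>\<infinity>r \<in> {r. \<bar>r\<bar> \<ge> int M - int N + 1}. \<bar>c r\<bar>)"
proof -
  define T where "T k = (\<lambda>l. off k + l * int M) ` (UNIV - {0})" for k
  have M: "int M > 0" using assms(4,5) by linarith
  have inj_shift: "inj_on (\<lambda>l. off k + l * int M) (UNIV - {0})" for k
    using M by (auto simp: inj_on_def)
  have summable_subset: "(\<lambda>r. \<bar>c r\<bar>) summable_on A" for A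
    using summable_on_subset[OF summable] by blast
  have class_bound: "\<bar>\<Sum>\<^sub>\<infinity>l\<in>UNIV - {0}. c (off k + l * int M)\<bar> \<le> (\<Sum>\<^sub>\<infinity>r\<in>T k. \<bar>c r\<bar>)" for k
  proof -
    have "(\<lambda>l. \<bar>c (off k + l * int M)\<bar>) summable_on (UNIV - {0})"
      using summable_subset[of "T k"] by (simp add: T_def summable_on_reindex[OF inj_shift] comp_def)
    then have "\<bar>\<Sum>\<^sub>\<infinity>l\<in>UNIV - {0}. c (off k + l * int M)\<bar> \<le> (\<Sum>\<^sub>\<infinity>l\<in>UNIV - {0}. \<bar>c (off k + l * int M)\<bar>)"
      using norm_infsum_bound[of "\<lambda>l. c (off k + l * int M)" "UNIV - {0}"] by simp
    also have "\<dots> = (\<Sum>\<^sub>\<infinity>r\<in>T k. \<bar>c r\<bar>)"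
      by (simp add: T_def infsum_reindex[OF inj_shift] comp_def)
    finally show ?thesis .
  qed
  have disjoint: "T k \<inter> T k' = {}" if "k < N" "k' < N" "k \<noteq> k'" for k k'
  proof (rule ccontr)
    assume "T k \<inter> T k' \<noteq> {}"
    then obtain l l' where "off k + l * int M = off k' + l' * int M"
      unfolding T_def by blast
    then have eq: "off k - off k' = (l' - l) * int M"
      by (simp add: algebra_simps)
    have "off k \<noteq> off k'" using inj that by (auto simp: inj_on_def)
    then have "l' \<noteq> l" using eq by auto
    then have "\<bar>(l' - l) * int M\<bar> \<ge> int M"
      using M by (simp add: abs_mult)
    moreover have "\<bar>off k - off k'\<bar> < int M"
      using off_bound[OF that(1)] off_bound[OF that(2)] assms(4) by linarith
    ultimately show False using eq by linarith
  qed
  have tail: "(\<Union>k<N. T k) \<subseteq> {r. \<bar>r\<bar> \<ge> int M - int N + 1}"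
  proof
    fix r assume "r \<in> (\<Union>k<N. T k)"
    then obtain k l where "k < N" "l \<noteq> 0" "r = off k + l * int M"
      unfolding T_def by auto
    moreover from \<open>l \<noteq> 0\<close> have "\<bar>l * int M\<bar> \<ge> int M" using M by (simp add: abs_mult)
    ultimately show "r \<in> {r. \<bar>r\<bar> \<ge> int M - int N + 1}" using off_bound[of k] by auto
  qed
  have "(\<Sum>k<N. \<bar>\<Sum>\<^sub>\<infinity>l\<in>UNIV - {0}. c (off k + l * int M)\<bar>) \<le> (\<Sum>k<N. \<Sum>\<^sub>\<infinity>r\<in>T k. \<bar>c r\<bar>)"
    by (intro sum_mono class_bound)
  also have "\<dots> = (\<Sum>\<^sub>\<infinity>r\<in>(\<Union>k<N. T k). \<bar>c r\<bar>)"
    by (rule sum_infsum) (simp_all add: summable_subset disjoint)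
  also have "\<dots> \<le> (\<Sum>\<^sub>\<infinity>r \<in> {r. \<bar>r\<bar> \<ge> int M - int N + 1}. \<bar>c r\<bar>)"
    by (rule infsum_mono_neutral) (use tail summable_subset in auto)
  finally show ?thesis .
qed

lemma one_minus_cos_le_abs_powr:
  fixes x e :: real
  assumes "0 \<le> e" and "e \<le> 2"
  shows "1 - cos x \<le> 2 * \<bar>x\<bar> powr e"
proof -
  define s where "s = \<bar>sin (x/2)\<bar>"
  have cos_eq: "1 - cos x = 2 * s^2"
    using cos_double_sin[of "x/2"] by (simp add: s_def power2_abs)
  show ?thesis
  proof (cases "s = 0")
    case False
    then have "s > 0" by (simp add: s_def)
    have "s^2 = s powr 2" using \<open>s > 0\<close> by (simp add: powr_numeral)
    also have "\<dots> \<le> s powr e"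
      using \<open>s > 0\<close> assms by (intro powr_mono') (auto simp: s_def)
    also have "\<dots> \<le> \<bar>x\<bar> powr e"
      using \<open>s > 0\<close> assms abs_sin_x_le_abs_x[of "x/2"] by (intro powr_mono2) (auto simp: s_def)
    finally show ?thesis using cos_eq by simp
  qed (use cos_eq in simp)
qed

text \<open>The factor \<open>1 - cos (w x) = O(x\<^sup>2)\<close> compensates the singularity of \<open>x powr (\<alpha> - 1)\<close> at 0.\<close>

lemma continuous_on_powr_mult_one_minus_cos:
  fixes a w \<alpha> :: real
  assumes "\<alpha> > 0"
  shows "continuous_on {0..a} (\<lambda>x. x powr (\<alpha> - 1) * (1 - cos (w * x)))"
proof -
  let ?H = "\<lambda>x. x powr (\<alpha> - 1) * (1 - cos (w * x))"
  have "continuous (at x within {0..a}) ?H" if "x \<in> {0..a}" for x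
  proof (cases "x = 0")
    case False
    with that have "isCont ?H x" by (intro continuous_intros) auto
    then show ?thesis using continuous_at_imp_continuous_at_within by blast
  next
    case True
    have bound: "norm (?H y) \<le> 2 * w^2 * y powr (\<alpha> + 1)" if "y > 0" for y
    proof -
      have "norm (?H y) = y powr (\<alpha> - 1) * (1 - cos (w * y))"
        by simp
      also have "\<dots> \<le> y powr (\<alpha> - 1) * (2 * \<bar>w * y\<bar> powr 2)"
        by (intro mult_left_mono one_minus_cos_le_abs_powr) auto
      also have "\<dots> = 2 * w^2 * (y powr (\<alpha> - 1) * y powr 2)"
        using that by (simp add: abs_mult powr_mult power2_eq_square powr_numeral)
      also have "y powr (\<alpha> - 1) * y powr 2 = y powr (\<alpha> + 1)"
        by (simp add: powr_add[symmetric] add.commute)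
      finally show ?thesis .
    qed
    have "eventually (\<lambda>y. norm (?H y) \<le> 2 * w^2 * y powr (\<alpha> + 1)) (at 0 within {0..a})"
      unfolding eventually_at_filter by (intro always_eventually allI impI bound) auto
    moreover have "((\<lambda>y::real. y powr (\<alpha> + 1)) \<longlongrightarrow> 0) (at 0 within {0..a})"
      by (rule tendsto_zero_powrI[of _ _ _ "\<alpha> + 1"])
        (use assms in \<open>auto intro!: tendsto_intros simp: eventually_at_filter\<close>)
    then have "((\<lambda>y. 2 * w^2 * y powr (\<alpha> + 1)) \<longlongrightarrow> 0) (at 0 within {0..a})"
      using tendsto_mult_right_zero by blast
    ultimately have "(?H \<longlongrightarrow> 0) (at 0 within {0..a})"
      by (rule Lim_null_comparison)
    then show ?thesis using True by (simp add: continuous_within)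
  qed
  then show ?thesis using continuous_on_eq_continuous_within by blast
qed

text \<open>Two integrations by parts, the second one against \<open>1 - cos (w x)\<close> rather than \<open>-cos (w x)\<close>
  so that the boundary term at 0 vanishes.\<close>

lemma has_integral_powr_cos_by_parts:
  fixes a w \<alpha> :: real
  assumes "a > 0" and "w \<noteq> 0" and "\<alpha> > 0"
  shows "((\<lambda>x. x powr \<alpha> * cos (w * x) - \<alpha> * (\<alpha> - 1) * x powr (\<alpha> - 2) * (1 - cos (w * x)) / w^2)
      has_integral (a powr \<alpha> * sin (w * a) / w - \<alpha> * a powr (\<alpha> - 1) * (1 - cos (w * a)) / w^2)) {0..a}"
proof -
  define P where
    "P x = x powr \<alpha> * sin (w * x) / w - \<alpha> * x powr (\<alpha> - 1) * (1 - cos (w * x)) / w^2" for x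
  have "(P has_real_derivative
      x powr \<alpha> * cos (w * x) - \<alpha> * (\<alpha> - 1) * x powr (\<alpha> - 2) * (1 - cos (w * x)) / w^2) (at x)"
    if "x > 0" for x
  proof -
    have d1: "((\<lambda>x. x powr \<alpha>) has_real_derivative \<alpha> * x powr (\<alpha> - 1)) (at x)"
      by (rule has_real_derivative_powr[OF that])
    have d2: "((\<lambda>x. x powr (\<alpha> - 1)) has_real_derivative (\<alpha> - 1) * x powr (\<alpha> - 2)) (at x)"
      using has_real_derivative_powr[OF that, of "\<alpha> - 1"] by (simp add: algebra_simps)
    have ds: "((\<lambda>x. sin (w * x)) has_real_derivative cos (w * x) * w) (at x)"
      by (auto intro!: derivative_eq_intros)
    have dc: "((\<lambda>x. 1 - cos (w * x)) has_real_derivative sin (w * x) * w) (at x)"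
      by (auto intro!: derivative_eq_intros)
    show ?thesis
      unfolding P_def
      by (rule DERIV_cong[OF DERIV_diff[OF DERIV_cdivide[OF DERIV_mult[OF d1 ds]]
            DERIV_cdivide[OF DERIV_mult[OF DERIV_cmult[OF d2] dc]]]])
        (use \<open>w \<noteq> 0\<close> in \<open>simp add: field_simps power2_eq_square\<close>)
  qed
  moreover have "continuous_on {0..a} P"
  proof -
    have "continuous_on {0..a} (\<lambda>x. x powr \<alpha> * sin (w * x) * (1 / w)
        - x powr (\<alpha> - 1) * (1 - cos (w * x)) * (\<alpha> / w^2))"
      using assms by (intro continuous_intros continuous_on_powr' continuous_on_powr_mult_one_minus_cos) auto
    then show ?thesis unfolding P_def by (rule continuous_on_eq) (simp add: field_simps)
  qed
  ultimately have "((\<lambda>x. x powr \<alpha> * cos (w * x) - \<alpha> * (\<alpha> - 1) * x powr (\<alpha> - 2) * (1 - cos (w * x)) / w^2)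
      has_integral (P a - P 0)) {0..a}"
    using \<open>a > 0\<close>
    by (intro fundamental_theorem_of_calculus_interior_strong[of "{}"])
      (auto simp: has_real_derivative_iff_has_vector_derivative)
  then show ?thesis by (simp add: P_def)
qed

lemma powr_mult_one_minus_cos_le:
  fixes w x \<alpha> :: real
  assumes "0 < \<alpha>" and "\<alpha> \<le> 2" and "x \<ge> 0"
  shows "x powr (\<alpha> - 2) * (1 - cos (w * x)) \<le> 2 * \<bar>w\<bar> powr (1 - \<alpha>/2) * x powr (\<alpha>/2 - 1)"
proof (cases "x = 0")
  case False
  with assms have "x > 0" by simp
  have "x powr (\<alpha> - 2) * (1 - cos (w * x)) \<le> x powr (\<alpha> - 2) * (2 * \<bar>w * x\<bar> powr (1 - \<alpha>/2))"
    using assms by (intro mult_left_mono one_minus_cos_le_abs_powr) auto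
  also have "\<dots> = 2 * \<bar>w\<bar> powr (1 - \<alpha>/2) * (x powr (\<alpha> - 2) * x powr (1 - \<alpha>/2))"
    using \<open>x > 0\<close> by (simp add: abs_mult powr_mult)
  also have "x powr (\<alpha> - 2) * x powr (1 - \<alpha>/2) = x powr (\<alpha>/2 - 1)"
    by (simp add: powr_add[symmetric])
  finally show ?thesis .
qed simp

lemma abs_integral_powr_cos_le:
  fixes a w \<alpha> :: real
  assumes "a > 0" and "w \<noteq> 0" and "0 < \<alpha>" and "\<alpha> \<le> 2" and "sin (w * a) = 0"
  shows "\<bar>integral {0..a} (\<lambda>x. x powr \<alpha> * cos (w * x))\<bar>
    \<le> (2 * \<alpha> * a powr (\<alpha> - 1) + 4 * \<bar>\<alpha> - 1\<bar> * \<bar>w\<bar> powr (1 - \<alpha>/2) * a powr (\<alpha>/2)) / w^2"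
proof -
  define J where "J = integral {0..a} (\<lambda>x. x powr \<alpha> * cos (w * x))"
  define G where "G = (\<lambda>x. \<alpha> * (\<alpha> - 1) * x powr (\<alpha> - 2) * (1 - cos (w * x)) / w^2)"
  define B where "B = \<alpha> * a powr (\<alpha> - 1) * (1 - cos (w * a)) / w^2"
  define K where "K = 2 * \<alpha> * \<bar>\<alpha> - 1\<bar> * \<bar>w\<bar> powr (1 - \<alpha>/2) / w^2"
  have "(\<lambda>x. x powr \<alpha> * cos (w * x)) integrable_on {0..a}"
    using assms by (intro integrable_continuous_interval continuous_intros continuous_on_powr') auto
  from has_integral_diff[OF integrable_integral[OF this] has_integral_powr_cos_by_parts[OF assms(1-3)]]
  have G_int: "(G has_integral (J + B)) {0..a}"
    by (simp add: J_def G_def B_def \<open>sin (w * a) = 0\<close>)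
  have K_int: "((\<lambda>x. K * x powr (\<alpha>/2 - 1)) has_integral (K * (a powr (\<alpha>/2) / (\<alpha>/2)))) {0..a}"
    using has_integral_mult_right[OF has_integral_powr_from_0[of "\<alpha>/2 - 1" a]] assms by simp
  have "norm (G x) \<le> K * x powr (\<alpha>/2 - 1)" if "x \<in> {0..a}" for x
  proof -
    have "norm (G x) = \<alpha> * \<bar>\<alpha> - 1\<bar> / w^2 * (x powr (\<alpha> - 2) * (1 - cos (w * x)))"
      using assms by (simp add: G_def abs_mult)
    also have "\<dots> \<le> \<alpha> * \<bar>\<alpha> - 1\<bar> / w^2 * (2 * \<bar>w\<bar> powr (1 - \<alpha>/2) * x powr (\<alpha>/2 - 1))"
      using assms that by (intro mult_left_mono powr_mult_one_minus_cos_le) auto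
    also have "\<dots> = K * x powr (\<alpha>/2 - 1)"
      by (simp add: K_def)
    finally show ?thesis .
  qed
  then have "\<bar>J + B\<bar> \<le> K * (a powr (\<alpha>/2) / (\<alpha>/2))"
    using has_integral_norm_bound_integral_component[OF G_int K_int, of 1] by simp
  moreover have "\<bar>B\<bar> \<le> 2 * \<alpha> * a powr (\<alpha> - 1) / w^2"
    using assms by (auto simp: B_def abs_mult divide_right_mono)
  ultimately have "\<bar>J\<bar> \<le> 2 * \<alpha> * a powr (\<alpha> - 1) / w^2 + K * (a powr (\<alpha>/2) / (\<alpha>/2))"
    by linarith
  also have "\<dots> = (2 * \<alpha> * a powr (\<alpha> - 1) + 4 * \<bar>\<alpha> - 1\<bar> * \<bar>w\<bar> powr (1 - \<alpha>/2) * a powr (\<alpha>/2)) / w^2"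
    using assms by (simp add: K_def field_simps)
  finally show ?thesis by (simp add: J_def)
qed

lemma frac_kernel_eq_integral_cos:
  fixes h \<alpha> :: real and r :: int
  assumes "h > 0" and "\<alpha> > 0"
  shows "frac_kernel h \<alpha> r = h / pi * integral {0..pi/h} (\<lambda>x. x powr \<alpha> * cos (h * of_int r * x))"
proof -
  define a where "a = pi / h"
  define f where
    "f = (\<lambda>\<xi>. complex_of_real (\<bar>\<xi>\<bar> powr \<alpha>) * exp (\<i> * complex_of_real (\<xi> * h * of_int r)))"
  define g where "g = (\<lambda>\<xi>. \<bar>\<xi>\<bar> powr \<alpha> * cos (h * of_int r * \<xi>))"
  have "a > 0" using assms by (simp add: a_def)
  have "continuous_on {-a..a} f"
    unfolding f_def using assms by (intro continuous_intros continuous_on_powr') auto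
  then have "((Re \<circ> f) has_integral Re (integral {-a..a} f)) {-a..a}"
    by (intro has_integral_linear[OF integrable_integral bounded_linear_Re] integrable_continuous_interval)
  moreover have "Re \<circ> f = g"
    by (auto simp: f_def g_def Re_exp mult_ac)
  ultimately have Re_integral: "Re (integral {-a..a} f) = integral {-a..a} g"
    by (metis integral_unique)
  have g_integrable: "g integrable_on {-a..a}"
    unfolding g_def using assms by (intro integrable_continuous_interval continuous_intros continuous_on_powr') auto
  have "integral {-a..a} g = integral {-a..0} g + integral {0..a} g"
    by (rule Henstock_Kurzweil_Integration.integral_combine[OF _ _ g_integrable, symmetric]) (use \<open>a > 0\<close> in auto)
  also have "integral {-a..0} g = integral {-a..-0} (\<lambda>x. g (-x))"
    by (simp add: g_def)
  also have "\<dots> = integral {0..a} g"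
    by (rule Henstock_Kurzweil_Integration.integral_reflect_real)
  also have "integral {0..a} g = integral {0..a} (\<lambda>x. x powr \<alpha> * cos (h * of_int r * x))"
    by (intro integral_cong) (simp add: g_def)
  finally have g_integral: "integral {-a..a} g = 2 * integral {0..a} (\<lambda>x. x powr \<alpha> * cos (h * of_int r * x))"
    by simp
  have "frac_kernel h \<alpha> r = h / (2 * pi) * Re (integral {-a..a} f)"
    by (simp add: frac_kernel_def frac_kernel_cplx_def f_def a_def)
  also have "\<dots> = h / pi * integral {0..a} (\<lambda>x. x powr \<alpha> * cos (h * of_int r * x))"
    unfolding Re_integral g_integral by simp
  finally show ?thesis by (simp add: a_def)
qed

text \<open>The rate is weaker than the true decay \<open>\<bar>r\<bar> powr (-1 - \<alpha>)\<close>, but summable.\<close>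

lemma frac_kernel_decay:
  fixes h \<alpha> :: real
  assumes "h > 0" and "0 < \<alpha>" and "\<alpha> \<le> 2"
  obtains C where "\<And>r. r \<noteq> 0 \<Longrightarrow> \<bar>frac_kernel h \<alpha> r\<bar> \<le> C * \<bar>real_of_int r\<bar> powr (-1 - \<alpha>/2)"
proof -
  define a where "a = pi / h"
  define C where
    "C = h / pi / h^2 * (2 * \<alpha> * a powr (\<alpha> - 1) + 4 * \<bar>\<alpha> - 1\<bar> * h powr (1 - \<alpha>/2) * a powr (\<alpha>/2))"
  have "\<bar>frac_kernel h \<alpha> r\<bar> \<le> C * \<bar>real_of_int r\<bar> powr (-1 - \<alpha>/2)" if "r \<noteq> 0" for r
  proof -
    define R where "R = \<bar>real_of_int r\<bar>"
    define w where "w = h * of_int r"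
    have "R \<ge> 1" using that by (simp add: R_def)
    have "a > 0" "w \<noteq> 0" using assms that by (simp_all add: a_def w_def)
    have "sin (w * a) = 0"
      using assms by (simp add: w_def a_def sin_zero_iff_int2)
    have w_sq: "w^2 = h^2 * R^2" and w_abs: "\<bar>w\<bar> = h * R"
      using assms by (simp_all add: w_def R_def power_mult_distrib abs_mult)
    have R_sq: "R^2 = R powr 2" using \<open>R \<ge> 1\<close> by (simp add: powr_numeral)
    have "1 / R^2 = R powr (-2)"
      by (simp add: R_sq powr_minus_divide)
    also have "\<dots> \<le> R powr (-1 - \<alpha>/2)"
      using \<open>R \<ge> 1\<close> assms by (intro powr_mono) auto
    finally have decay1: "1 / R^2 \<le> R powr (-1 - \<alpha>/2)" .
    have "R powr (1 - \<alpha>/2) / R^2 = R powr (1 - \<alpha>/2 - 2)"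
      unfolding R_sq by (rule powr_diff[symmetric])
    also have "\<dots> = R powr (-1 - \<alpha>/2)"
      by (simp add: algebra_simps)
    finally have decay2: "R powr (1 - \<alpha>/2) / R^2 = R powr (-1 - \<alpha>/2)" .
    have "\<bar>frac_kernel h \<alpha> r\<bar> = h / pi * \<bar>integral {0..a} (\<lambda>x. x powr \<alpha> * cos (w * x))\<bar>"
      using assms by (simp add: frac_kernel_eq_integral_cos a_def w_def abs_mult)
    also have "\<dots> \<le> h / pi * ((2 * \<alpha> * a powr (\<alpha> - 1)
        + 4 * \<bar>\<alpha> - 1\<bar> * \<bar>w\<bar> powr (1 - \<alpha>/2) * a powr (\<alpha>/2)) / w^2)"
      using assms \<open>a > 0\<close> \<open>w \<noteq> 0\<close> \<open>sin (w * a) = 0\<close>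
      by (intro mult_left_mono abs_integral_powr_cos_le) auto
    also have "\<dots> = h / pi / h^2 * (2 * \<alpha> * a powr (\<alpha> - 1) * (1 / R^2)
        + 4 * \<bar>\<alpha> - 1\<bar> * h powr (1 - \<alpha>/2) * a powr (\<alpha>/2) * (R powr (1 - \<alpha>/2) / R^2))"
      using assms \<open>R \<ge> 1\<close> by (simp add: w_sq w_abs powr_mult field_simps)
    also have "\<dots> \<le> h / pi / h^2 * (2 * \<alpha> * a powr (\<alpha> - 1) * R powr (-1 - \<alpha>/2)
        + 4 * \<bar>\<alpha> - 1\<bar> * h powr (1 - \<alpha>/2) * a powr (\<alpha>/2) * R powr (-1 - \<alpha>/2))"
      unfolding decay2 using decay1 assms by (intro mult_left_mono add_right_mono) auto
    also have "\<dots> = C * R powr (-1 - \<alpha>/2)"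
      by (simp add: C_def algebra_simps)
    finally show ?thesis by (simp add: R_def)
  qed
  then show ?thesis by (rule that)
qed

lemma summable_on_abs_int_powr:
  fixes p :: real
  assumes "p > 1"
  shows "(\<lambda>r::int. \<bar>real_of_int r\<bar> powr (-p)) summable_on UNIV"
proof -
  let ?g = "\<lambda>r::int. \<bar>real_of_int r\<bar> powr (-p)"
  have nat: "(\<lambda>n::nat. real n powr (-p)) summable_on UNIV"
    using assms by (intro summable_nonneg_imp_summable_on) (auto simp: summable_real_powr_iff)
  have "?g summable_on range int"
    using nat by (subst summable_on_reindex) (auto simp: comp_def inj_on_def)
  moreover have "?g summable_on range (\<lambda>n. - int n)"
    using nat by (subst summable_on_reindex) (auto simp: comp_def inj_on_def)
  ultimately have "?g summable_on (range int \<union> range (\<lambda>n. - int n))"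
    by (rule summable_on_union)
  moreover have "range int \<union> range (\<lambda>n. - int n) = (UNIV :: int set)"
    by (auto simp: image_iff intro: int_cases2)
  ultimately show ?thesis by simp
qed

lemma frac_kernel_abs_summable:
  fixes h \<alpha> :: real
  assumes "h > 0" and "0 < \<alpha>" and "\<alpha> \<le> 2"
  shows "(\<lambda>r. \<bar>frac_kernel h \<alpha> r\<bar>) summable_on UNIV"
proof -
  obtain C where C: "\<And>r. r \<noteq> 0 \<Longrightarrow> \<bar>frac_kernel h \<alpha> r\<bar> \<le> C * \<bar>real_of_int r\<bar> powr (-1 - \<alpha>/2)"
    using frac_kernel_decay[OF assms] by blast
  have "(\<lambda>r::int. \<bar>real_of_int r\<bar> powr (-1 - \<alpha>/2)) summable_on UNIV"
    using summable_on_abs_int_powr[of "1 + \<alpha>/2"] assms by (simp add: algebra_simps)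
  then have "(\<lambda>r::int. C * \<bar>real_of_int r\<bar> powr (-1 - \<alpha>/2)) summable_on (UNIV - {0})"
    by (intro summable_on_subset[OF summable_on_cmult_right]) auto
  then have "(\<lambda>r. \<bar>frac_kernel h \<alpha> r\<bar>) summable_on (UNIV - {0})"
    by (rule summable_on_comparison_test) (auto intro: C)
  then have "(\<lambda>r. \<bar>frac_kernel h \<alpha> r\<bar>) summable_on insert 0 (UNIV - {0})"
    by (simp only: summable_on_insert_iff)
  then show ?thesis by simp
qed

theorem mainTheorem3:
  fixes h \<alpha> :: real and n m N M :: nat
  assumes "h > 0" and "0 < \<alpha>" and "\<alpha> \<le> 2"
    and "N = 2 ^ n" and "M = 2 ^ m" and "M \<ge> 2 * N"
  shows "spec_norm N (E_mat h \<alpha> M)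
           \<le> (\<Sum>\<^sub>\<infinity> r \<in> {r::int. \<bar>r\<bar> \<ge> int M - int N + 1}. \<bar>frac_kernel h \<alpha> r\<bar>)"
proof -
  \<comment> \<open>The dyadic form of \<open>N\<close> and \<open>M\<close> is used only to get \<open>N > 0\<close>.\<close>
  have "N > 0" using \<open>N = 2 ^ n\<close> by simp
  note tail_bound = sum_abs_infsum_shifted_lattice_le_tail
    [OF frac_kernel_abs_summable[OF assms(1-3)] _ _ \<open>M \<ge> 2 * N\<close> \<open>N > 0\<close>]
  show ?thesis
  proof (rule spec_norm_le_Schur[OF \<open>N > 0\<close>])
    fix i assume "i < N"
    then show "(\<Sum>j<N. \<bar>E_mat h \<alpha> M i j\<bar>) \<le> (\<Sum>\<^sub>\<infinity>r \<in> {r. \<bar>r\<bar> \<ge> int M - int N + 1}. \<bar>frac_kernel h \<alpha> r\<bar>)"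
      unfolding E_mat_def by (intro tail_bound[of "\<lambda>j. int i - int j"]) (auto simp: inj_on_def)
  next
    fix j assume "j < N"
    then show "(\<Sum>i<N. \<bar>E_mat h \<alpha> M i j\<bar>) \<le> (\<Sum>\<^sub>\<infinity>r \<in> {r. \<bar>r\<bar> \<ge> int M - int N + 1}. \<bar>frac_kernel h \<alpha> r\<bar>)"
      unfolding E_mat_def by (intro tail_bound[of "\<lambda>i. int i - int j"]) (auto simp: inj_on_def)
  qed
qed

end
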